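(* Let $R>\pi$, $\varepsilon\in(0,1)$, $C>0$, and let $\phi\in C^0([0,R])$ satisfy $\phi(0)=\phi(R)=0$ and $\phi>0$ in $(0,R)$. Then there exists $\bar b>1$ such that the solution $\psi$ of $$-\psi''=\psi(1-\bar b\phi-\psi)\ \text{ in }(0,R),\qquad \psi(0)=\psi(R)=1-\varepsilon,$$ satisfies $\psi<1-\varepsilon$ in $(0,R)$, $\psi'(0)<-C$ and $\psi'(R)>C$.
   Context: Here "the solution" refers to the classical solution with values in $[0,1]$ obtained by the monotone (sub/supersolution) method, using $0$ and $1$ as sub- and supersolution. *)

theory Defs
  imports "HOL-Analysis.Analysis"
begin

definition is_sol :: "real \<Rightarrow> real \<Rightarrow> (real \<Rightarrow> real) \<Rightarrow> real \<Rightarrow> (real \<Rightarrow> real) \<Rightarrow> (real \<Rightarrow> real) \<Rightarrow> bool" where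
  "is_sol R b \<phi> \<epsilon> \<psi> d\<psi> \<longleftrightarrow>
     (\<forall>x\<in>{0..R}. (\<psi> has_real_derivative d\<psi> x) (at x within {0..R})) \<and>
     (\<forall>x\<in>{0<..<R}. (d\<psi> has_real_derivative (- (\<psi> x * (1 - b * \<phi> x - \<psi> x)))) (at x)) \<and>
     (\<forall>x\<in>{0..R}. 0 \<le> \<psi> x \<and> \<psi> x \<le> 1) \<and>
     \<psi> 0 = 1 - \<epsilon> \<and> \<psi> R = 1 - \<epsilon>"

end

theory Submission
  imports Defs
begin

text \<open>
  Truncating the logistic nonlinearity to \<open>\<psi> \<in> [0, 1]\<close> makes it bounded and globally Lipschitz.
  The initial value problem with slope \<open>s\<close> at \<open>0\<close> is then solved by a contraction in an
  exponentially weighted sup norm; the value at \<open>R\<close> depends continuously on \<open>s\<close> and is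
  \<open>a + s R + O(1)\<close>, so the intermediate value theorem hits the boundary value, and the maximum
  principle shows that the solution lies in \<open>[0, 1]\<close>, where the truncation is inactive.

  For the boundary layer note that \<open>\<psi> \<le> 1\<close> and \<open>b \<phi> \<ge> 0\<close> give \<open>\<psi>'' \<ge> -1\<close>. If at a point \<open>z\<close> of
  the left half \<open>\<psi> z \<ge> 1 - \<epsilon>\<close> and \<open>\<psi>' z \<ge> -C\<close>, then \<psi> stays above \<open>(1 - \<epsilon>)/2\<close> on
  \<open>[z, z + 2 \<delta>]\<close>, and on a subinterval of length \<open>\<delta>\<close> inside \<open>[\<delta>, R - \<delta>]\<close>, where \<open>\<phi> \<ge> m > 0\<close>,
  the equation gives \<open>\<psi>'' = \<psi> (b \<phi> + \<psi> - 1) \<ge> (1 - \<epsilon>) (b m - 1) / 2\<close>; for large \<open>b\<close> this pushes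
  \<psi> above \<open>1\<close>. Applied at \<open>z = 0\<close>, at an interior maximum (where \<open>\<psi>' = 0\<close>) and to the
  reflected solution, this yields all three claims.
\<close>

section \<open>Second-order differential inequalities\<close>

lemma deriv_left_endpoint_le_of_second_deriv_nonneg:
  fixes f f' f'' :: "real \<Rightarrow> real"
  assumes f': "\<And>x. x \<in> {p..q} \<Longrightarrow> (f has_real_derivative f' x) (at x within {p..q})"
    and f'': "\<And>x. x \<in> {p<..<q} \<Longrightarrow> (f' has_real_derivative f'' x) (at x)"
    and nonneg: "\<And>x. x \<in> {p<..<q} \<Longrightarrow> 0 \<le> f'' x"
    and x: "x \<in> {p..<q}"
  shows "f' p \<le> f' x"
proof (cases "x = p")
  case False
  then have x: "x \<in> {p<..<q}" using x by auto
  have f_at: "(f has_real_derivative f' t) (at t)" if "t \<in> {p<..<q}" for t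
    using f'[of t] that at_within_Icc_at[of p t q] by auto
  \<comment> \<open>\<open>f'\<close> is monotone on the open interval only, so \<open>f' p\<close> is reached through difference quotients.\<close>
  have "(f t - f p) / (t - p) \<le> f' x" if "p < t" "t < x" for t
  proof -
    have "continuous_on {p..t} f"
      using that x by (intro DERIV_continuous_on[of _ _ f'] DERIV_subset[OF f']) auto
    moreover have "f differentiable (at y)" if "p < y" "y < t" for y
      using f_at[of y] that \<open>t < x\<close> x real_differentiable_def by force
    ultimately obtain l y where y: "p < y" "y < t" "DERIV f y :> l" "f t - f p = (t - p) * l"
      using MVT[OF \<open>p < t\<close>] by blast
    have "l = f' y" using y(3) f_at[of y] y that x DERIV_unique by force
    moreover have "f' y \<le> f' x"
      using y that x f'' nonneg by (intro deriv_nonneg_imp_mono[of y x f']) force+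
    ultimately show ?thesis using y that by (simp add: divide_simps mult.commute)
  qed
  then have "\<forall>\<^sub>F t in at_right p. (f t - f p) / (t - p) \<le> f' x"
    unfolding eventually_at_right_field using x by (auto intro!: exI[of _ x])
  moreover have "((\<lambda>t. (f t - f p) / (t - p)) \<longlongrightarrow> f' p) (at_right p)"
    using f'[of p] x by (simp add: has_field_derivative_iff at_within_Icc_at_right)
  ultimately show ?thesis by (auto intro: tendsto_upperbound)
qed simp

lemma tangent_le_of_second_deriv_nonneg:
  fixes f f' f'' :: "real \<Rightarrow> real"
  assumes f': "\<And>x. x \<in> {p..q} \<Longrightarrow> (f has_real_derivative f' x) (at x within {p..q})"
    and f'': "\<And>x. x \<in> {p<..<q} \<Longrightarrow> (f' has_real_derivative f'' x) (at x)"
    and nonneg: "\<And>x. x \<in> {p<..<q} \<Longrightarrow> 0 \<le> f'' x"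
    and x: "x \<in> {p..q}"
  shows "f p + f' p * (x - p) \<le> f x"
proof -
  have "f p - f' p * p \<le> f x - f' p * x"
  proof (rule DERIV_nonneg_imp_increasing_open[of p x "\<lambda>x. f x - f' p * x"])
    fix y assume "p < y" "y < x"
    then have "y \<in> {p<..<q}" using x by auto
    then show "\<exists>l. ((\<lambda>x. f x - f' p * x) has_real_derivative l) (at y) \<and> 0 \<le> l"
      using f'[of y] at_within_Icc_at[of p y q]
        deriv_left_endpoint_le_of_second_deriv_nonneg[OF f' f'' nonneg, of y]
      by (intro exI[of _ "f' y - f' p"]) (auto intro!: derivative_eq_intros)
  next
    show "continuous_on {p..x} (\<lambda>x. f x - f' p * x)"
      using x by (intro continuous_intros DERIV_continuous_on[of _ _ f'] DERIV_subset[OF f']) auto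
  qed (use x in auto)
  then show ?thesis by (simp add: algebra_simps)
qed

lemma second_deriv_lower_bound:
  fixes f f' f'' :: "real \<Rightarrow> real"
  assumes f': "\<And>x. x \<in> {p..q} \<Longrightarrow> (f has_real_derivative f' x) (at x within {p..q})"
    and f'': "\<And>x. x \<in> {p<..<q} \<Longrightarrow> (f' has_real_derivative f'' x) (at x)"
    and lower: "\<And>x. x \<in> {p<..<q} \<Longrightarrow> c \<le> f'' x"
  shows "x \<in> {p..<q} \<Longrightarrow> f' p + c * (x - p) \<le> f' x"
    and "x \<in> {p..q} \<Longrightarrow> f p + f' p * (x - p) + c * (x - p)^2 / 2 \<le> f x"
proof -
  define h where "h x = f x - c * (x - p)^2 / 2" for x
  define h' where "h' x = f' x - c * (x - p)" for x
  have h': "(h has_real_derivative h' x) (at x within {p..q})" if "x \<in> {p..q}" for x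
    unfolding h_def h'_def using f'[OF that]
    by (auto intro!: derivative_eq_intros simp: power2_eq_square field_simps)
  have h'': "(h' has_real_derivative f'' x - c) (at x)" if "x \<in> {p<..<q}" for x
    unfolding h'_def using f''[OF that] by (auto intro!: derivative_eq_intros)
  have nonneg: "0 \<le> f'' x - c" if "x \<in> {p<..<q}" for x
    using lower[OF that] by simp
  show "x \<in> {p..<q} \<Longrightarrow> f' p + c * (x - p) \<le> f' x"
    using deriv_left_endpoint_le_of_second_deriv_nonneg[OF h' h'' nonneg, of x] by (simp add: h'_def)
  show "x \<in> {p..q} \<Longrightarrow> f p + f' p * (x - p) + c * (x - p)^2 / 2 \<le> f x"
    using tangent_le_of_second_deriv_nonneg[OF h' h'' nonneg, of x] by (simp add: h_def h'_def)
qed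

lemma stays_above_half_of_second_deriv_ge_neg_one:
  fixes f f' f'' :: "real \<Rightarrow> real"
  assumes f': "\<And>x. x \<in> {z..q} \<Longrightarrow> (f has_real_derivative f' x) (at x within {z..q})"
    and f'': "\<And>x. x \<in> {z<..<q} \<Longrightarrow> (f' has_real_derivative f'' x) (at x)"
    and lower: "\<And>x. x \<in> {z<..<q} \<Longrightarrow> -1 \<le> f'' x"
    and start: "a \<le> f z" "- C \<le> f' z" "0 \<le> C"
    and short: "q - z \<le> 2 * \<delta>" "2 * C * \<delta> + 2 * \<delta>^2 \<le> a / 2"
    and y: "y \<in> {z..q}"
  shows "a / 2 \<le> f y"
proof -
  have "- C * (y - z) \<le> f' z * (y - z)"
    using y start by (intro mult_right_mono) auto
  moreover have "C * (y - z) \<le> C * (2 * \<delta>)"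
    using y short start by (intro mult_left_mono) auto
  moreover have "(y - z)^2 \<le> (2 * \<delta>)^2"
    using y short by (intro power_mono) auto
  ultimately show ?thesis
    using second_deriv_lower_bound(2)[OF f' f'' lower y] start short by (auto simp: power_mult_distrib)
qed

lemma exists_interior_max_deriv_zero:
  fixes f f' :: "real \<Rightarrow> real"
  assumes f': "\<And>x. x \<in> {p..q} \<Longrightarrow> (f has_real_derivative f' x) (at x within {p..q})"
    and x0: "x0 \<in> {p<..<q}" and "f p \<le> f x0" "f q \<le> f x0"
  obtains x where "x \<in> {p<..<q}" "f x0 \<le> f x" "f' x = 0"
proof -
  have "continuous_on {p..q} f" using f' DERIV_continuous_on by blast
  then obtain x1 where x1: "x1 \<in> {p..q}" "\<forall>y\<in>{p..q}. f y \<le> f x1"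
    using continuous_attains_sup[of "{p..q}" f] x0 by auto
  define x where "x = (if x1 \<in> {p<..<q} then x1 else x0)"
  have x: "x \<in> {p<..<q}" "\<forall>y\<in>{p..q}. f y \<le> f x"
    using x0 x1 assms(3,4) unfolding x_def by (auto simp: antisym_conv1)
  have "f' x = 0"
  proof (rule DERIV_local_max[of f "f' x" x "min (x - p) (q - x)"])
    show "(f has_real_derivative f' x) (at x)"
      using f'[of x] x(1) at_within_Icc_at[of p x q] by auto
    show "\<forall>y. \<bar>x - y\<bar> < min (x - p) (q - x) \<longrightarrow> f y \<le> f x"
      using x by (auto simp: abs_less_iff)
  qed (use x in auto)
  then show thesis using that x x0 by auto
qed

lemma first_point_below:
  fixes f :: "real \<Rightarrow> real"
  assumes "p \<le> q" and cont: "continuous_on {p..q} f" and "\<theta> < f p" "f q \<le> \<theta>"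
  obtains z where "z \<in> {p<..q}" "f z \<le> \<theta>" "\<And>t. t \<in> {p<..<z} \<Longrightarrow> \<theta> < f t"
proof -
  define S where "S = {p..q} \<inter> f -` {..\<theta>}"
  have "closed S"
    unfolding S_def using cont by (rule continuous_closed_preimage) auto
  moreover have "q \<in> S" "bdd_below S"
    unfolding S_def using assms by (auto intro: bdd_belowI[of _ p])
  ultimately have Inf: "Inf S \<in> S" using closed_contains_Inf by blast
  have "\<theta> < f t" if "t \<in> {p<..<Inf S}" for t
    using that Inf cInf_lower[OF _ \<open>bdd_below S\<close>, of t] unfolding S_def by force
  moreover have "Inf S \<in> {p<..q}" "f (Inf S) \<le> \<theta>"
    using Inf assms(3) unfolding S_def by (auto simp: order.order_iff_strict)
  ultimately show thesis using that by blast
qed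

lemma max_principle:
  fixes f f' f'' :: "real \<Rightarrow> real"
  assumes "p < q"
    and f': "\<And>x. x \<in> {p..q} \<Longrightarrow> (f has_real_derivative f' x) (at x within {p..q})"
    and f'': "\<And>x. x \<in> {p<..<q} \<Longrightarrow> (f' has_real_derivative f'' x) (at x)"
    and boundary: "f p \<le> \<theta>" "f q \<le> \<theta>"
    and convex_above: "\<And>x. x \<in> {p<..<q} \<Longrightarrow> \<theta> < f x \<Longrightarrow> 0 \<le> f'' x"
    and x: "x \<in> {p..q}"
  shows "f x \<le> \<theta>"
proof (rule ccontr)
  assume "\<not> f x \<le> \<theta>"
  then have interior: "x \<in> {p<..<q}" "f p \<le> f x" "f q \<le> f x"
    using x boundary by (auto simp: less_eq_real_def)
  obtain x1 where x1: "x1 \<in> {p<..<q}" "f x \<le> f x1" "f' x1 = 0"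
    using exists_interior_max_deriv_zero[OF f' interior] by blast
  then have "\<theta> < f x1" using \<open>\<not> f x \<le> \<theta>\<close> by simp
  have "continuous_on {x1..q} f"
    using x1 by (intro DERIV_continuous_on[of _ _ f'] DERIV_subset[OF f']) auto
  then obtain z where z: "z \<in> {x1<..q}" "f z \<le> \<theta>" "\<And>t. t \<in> {x1<..<z} \<Longrightarrow> \<theta> < f t"
    using first_point_below[of x1 q f \<theta>] x1 \<open>\<theta> < f x1\<close> boundary by auto
  have "f x1 + f' x1 * (z - x1) \<le> f z"
  proof (rule tangent_le_of_second_deriv_nonneg[where q = z and f'' = f''])
    show "(f has_real_derivative f' t) (at t within {x1..z})" if "t \<in> {x1..z}" for t
      using f'[of t] that x1 z by (auto intro: DERIV_subset)
    show "(f' has_real_derivative f'' t) (at t)" "0 \<le> f'' t" if "t \<in> {x1<..<z}" for t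
      using f''[of t] convex_above[of t] z(3)[of t] that x1 z by auto
  qed (use z in auto)
  then show False using x1 z \<open>\<theta> < f x1\<close> by simp
qed

section \<open>Boundary value problems with a bounded Lipschitz nonlinearity\<close>

lemma has_real_derivative_integral_linear_kernel:
  fixes g :: "real \<Rightarrow> real"
  assumes g: "continuous_on {0..R} g" and x: "x \<in> {0..R}"
  shows "((\<lambda>x. integral {0..x} (\<lambda>t. (x - t) * g t)) has_real_derivative integral {0..x} g)
           (at x within {0..R})"
proof -
  have split: "integral {0..y} (\<lambda>t. (y - t) * g t) = y * integral {0..y} g - integral {0..y} (\<lambda>t. t * g t)"
    if "y \<in> {0..R}" for y
  proof -
    have "continuous_on {0..y} g" using that by (intro continuous_on_subset[OF g]) auto
    then have "(\<lambda>t. y * g t) integrable_on {0..y}" "(\<lambda>t. t * g t) integrable_on {0..y}"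
      by (auto intro!: integrable_continuous_real continuous_intros)
    then show ?thesis by (simp add: left_diff_distrib integral_diff)
  qed
  have tg: "continuous_on {0..R} (\<lambda>t. t * g t)" using g by (intro continuous_intros)
  have "((\<lambda>y. y * integral {0..y} g - integral {0..y} (\<lambda>t. t * g t)) has_real_derivative
      integral {0..x} g) (at x within {0..R})"
    using integral_has_real_derivative[OF g x] integral_has_real_derivative[OF tg x]
    by (auto intro!: derivative_eq_intros)
  then show ?thesis
    by (rule has_field_derivative_transform_within[OF _ zero_less_one x]) (simp add: split)
qed

lemma integral_exp_linear:
  fixes w x :: real
  assumes "w \<noteq> 0" "0 \<le> x"
  shows "integral {0..x} (\<lambda>t. exp (w * t)) = (exp (w * x) - 1) / w"
proof -
  have "((\<lambda>t. exp (w * t)) has_integral (exp (w * x) / w - exp (w * 0) / w)) {0..x}"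
  proof (rule fundamental_theorem_of_calculus[OF \<open>0 \<le> x\<close>])
    fix t
    have "((\<lambda>t. exp (w * t) / w) has_real_derivative exp (w * t)) (at t within {0..x})"
      using \<open>w \<noteq> 0\<close> by (auto intro!: derivative_eq_intros)
    then show "((\<lambda>t. exp (w * t) / w) has_vector_derivative exp (w * t)) (at t within {0..x})"
      by (simp add: has_real_derivative_iff_has_vector_derivative)
  qed
  then show ?thesis by (simp add: integral_unique diff_divide_distrib)
qed

context
  fixes R L M a :: real and F :: "real \<Rightarrow> real \<Rightarrow> real"
  assumes R_pos: "0 < R" and L_pos: "0 < L"
    and F_cont: "continuous_on ({0..R} \<times> UNIV) (\<lambda>(t, u). F t u)"
    and F_bounded: "\<And>t u. t \<in> {0..R} \<Longrightarrow> \<bar>F t u\<bar> \<le> M"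
    and F_lipschitz: "\<And>t u v. t \<in> {0..R} \<Longrightarrow> \<bar>F t u - F t v\<bar> \<le> L * \<bar>u - v\<bar>"
begin

lemma continuous_on_superposition:
  assumes "continuous_on {0..R} y"
  shows "continuous_on {0..R} (\<lambda>t. F t (y t))"
proof -
  have "continuous_on {0..R} (\<lambda>t. (t, y t))" using assms by (intro continuous_intros)
  from continuous_on_compose2[OF F_cont this] show ?thesis by auto
qed

definition picard :: "real \<Rightarrow> (real \<Rightarrow> real) \<Rightarrow> real \<Rightarrow> real" where
  "picard s y x = a + s * x + integral {0..x} (\<lambda>t. (x - t) * F t (y t))"

lemma has_real_derivative_picard:
  assumes "continuous_on {0..R} y" "x \<in> {0..R}"
  shows "(picard s y has_real_derivative s + integral {0..x} (\<lambda>t. F t (y t))) (at x within {0..R})"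
  unfolding picard_def
  using has_real_derivative_integral_linear_kernel[OF continuous_on_superposition[OF assms(1)] assms(2)]
  by (auto intro!: derivative_eq_intros)

lemma continuous_on_picard: "continuous_on {0..R} y \<Longrightarrow> continuous_on {0..R} (picard s y)"
  by (rule DERIV_continuous_on[OF has_real_derivative_picard])

lemma picard_dist:
  assumes "0 < w" "x \<in> {0..R}"
    and y: "continuous_on {0..R} y1" "continuous_on {0..R} y2"
    and close: "\<And>t. t \<in> {0..x} \<Longrightarrow> \<bar>y1 t - y2 t\<bar> \<le> d * exp (w * t)"
  shows "\<bar>picard s y1 x - picard s y2 x\<bar> \<le> R * L * d * (exp (w * x) - 1) / w"
proof -
  have "continuous_on {0..x} (\<lambda>t. F t (y1 t))" "continuous_on {0..x} (\<lambda>t. F t (y2 t))"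
    using assms by (auto intro: continuous_on_subset[OF continuous_on_superposition])
  then have int: "(\<lambda>t. (x - t) * F t (y1 t)) integrable_on {0..x}"
    "(\<lambda>t. (x - t) * F t (y2 t)) integrable_on {0..x}"
    "(\<lambda>t. (x - t) * (F t (y1 t) - F t (y2 t))) integrable_on {0..x}"
    by (auto intro!: integrable_continuous_real continuous_intros)
  have "picard s y1 x - picard s y2 x = integral {0..x} (\<lambda>t. (x - t) * (F t (y1 t) - F t (y2 t)))"
    unfolding picard_def using int by (simp add: right_diff_distrib integral_diff)
  moreover have "\<bar>integral {0..x} (\<lambda>t. (x - t) * (F t (y1 t) - F t (y2 t)))\<bar>
      \<le> integral {0..x} (\<lambda>t. R * L * d * exp (w * t))"
  proof (rule integral_norm_bound_integral[where 'a = real and 'n = real, unfolded real_norm_def])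
    fix t assume t: "t \<in> {0..x}"
    have "\<bar>F t (y1 t) - F t (y2 t)\<bar> \<le> L * (d * exp (w * t))"
      using order_trans[OF F_lipschitz mult_left_mono[OF close]] t assms L_pos by auto
    moreover have "\<bar>x - t\<bar> \<le> R" using t assms by auto
    ultimately show "\<bar>(x - t) * (F t (y1 t) - F t (y2 t))\<bar> \<le> R * L * d * exp (w * t)"
      unfolding abs_mult mult.assoc by (intro mult_mono) auto
  next
    show "(\<lambda>t. R * L * d * exp (w * t)) integrable_on {0..x}"
      by (intro integrable_continuous_real continuous_intros)
  qed (fact int)
  moreover have "integral {0..x} (\<lambda>t. R * L * d * exp (w * t)) = R * L * d * (exp (w * x) - 1) / w"
    using integral_exp_linear[of w x] assms by simp
  ultimately show ?thesis by simp
qed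

definition picard_weight :: real where
  "picard_weight = 2 * R * L"

lemma picard_weight_pos: "0 < picard_weight"
  unfolding picard_weight_def using R_pos L_pos by simp

text \<open>The operator acts on \<open>z = exp (- w x) y\<close>, extended constantly outside \<open>[0, R]\<close>; the weight
  \<open>w = 2 R L\<close> makes it a \<open>1/2\<close>-contraction for the sup norm.\<close>

definition weighted_picard :: "real \<Rightarrow> (real \<Rightarrow>\<^sub>C real) \<Rightarrow> (real \<Rightarrow>\<^sub>C real)" where
  "weighted_picard s z = Bcontfun (\<lambda>x. exp (- picard_weight * clamp 0 R x) *
     picard s (\<lambda>t. exp (picard_weight * t) * z t) (clamp 0 R x))"

lemma weighted_picard_apply:
  "weighted_picard s z x = exp (- picard_weight * clamp 0 R x) *
     picard s (\<lambda>t. exp (picard_weight * t) * z t) (clamp 0 R x)"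
proof -
  define h where "h y = exp (- picard_weight * y) * picard s (\<lambda>t. exp (picard_weight * t) * z t) y" for y
  have h: "continuous_on (cbox 0 R) h"
    unfolding h_def by (auto intro!: continuous_intros continuous_on_picard)
  have "bounded (range (\<lambda>x. h (clamp 0 R x)))"
    by (intro clamp_bounded compact_imp_bounded compact_continuous_image h) simp
  then have "(\<lambda>x. h (clamp 0 R x)) \<in> bcontfun"
    unfolding bcontfun_def using clamp_continuous_on[OF h] by simp
  then show ?thesis
    unfolding weighted_picard_def h_def[symmetric] by (simp add: Bcontfun_inverse)
qed

lemma weighted_picard_contraction:
  "dist (weighted_picard s z1) (weighted_picard s z2) \<le> 1/2 * dist z1 z2"
proof (rule dist_bound)
  fix x
  define y where "y = clamp 0 R x"
  have y: "y \<in> {0..R}" unfolding y_def using clamp_in_interval[of 0 R x] R_pos by simp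
  define w where "w = picard_weight"
  have w: "0 < w" unfolding w_def by (rule picard_weight_pos)
  have "\<bar>picard s (\<lambda>t. exp (w * t) * z1 t) y - picard s (\<lambda>t. exp (w * t) * z2 t) y\<bar>
      \<le> R * L * dist z1 z2 * (exp (w * y) - 1) / w"
  proof (rule picard_dist[OF w y])
    fix t
    have "\<bar>exp (w * t) * z1 t - exp (w * t) * z2 t\<bar> = exp (w * t) * dist (z1 t) (z2 t)"
      by (simp add: dist_real_def abs_mult flip: right_diff_distrib)
    also have "\<dots> \<le> dist z1 z2 * exp (w * t)"
      using dist_bounded[of z1 t z2] by (simp add: mult.commute)
    finally show "\<bar>exp (w * t) * z1 t - exp (w * t) * z2 t\<bar> \<le> dist z1 z2 * exp (w * t)" .
  qed (auto intro!: continuous_intros)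
  then have "exp (- w * y) * \<bar>picard s (\<lambda>t. exp (w * t) * z1 t) y - picard s (\<lambda>t. exp (w * t) * z2 t) y\<bar>
      \<le> R * L * dist z1 z2 * (1 - exp (- w * y)) / w"
    using mult_left_mono[of _ _ "exp (- w * y)"]
    by (fastforce simp: field_simps exp_minus)
  also have "\<dots> \<le> R * L * dist z1 z2 * 1 / w"
    using w R_pos L_pos by (intro divide_right_mono mult_left_mono) auto
  also have "\<dots> = 1/2 * dist z1 z2"
    unfolding w_def picard_weight_def using R_pos L_pos by simp
  finally show "dist (weighted_picard s z1 x) (weighted_picard s z2 x) \<le> 1/2 * dist z1 z2"
    unfolding weighted_picard_apply dist_real_def w_def y_def
    by (simp add: abs_mult flip: right_diff_distrib)
qed

lemma weighted_picard_slope_dist: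
  "dist (weighted_picard s z) (weighted_picard s' z) \<le> R * \<bar>s - s'\<bar>"
proof (rule dist_bound)
  fix x
  define y where "y = clamp 0 R x"
  have y: "y \<in> {0..R}" unfolding y_def using clamp_in_interval[of 0 R x] R_pos by simp
  have "exp (- picard_weight * y) * (\<bar>s - s'\<bar> * y) \<le> 1 * (\<bar>s - s'\<bar> * R)"
    using y picard_weight_pos by (intro mult_mono mult_left_mono) auto
  then show "dist (weighted_picard s z x) (weighted_picard s' z x) \<le> R * \<bar>s - s'\<bar>"
    unfolding weighted_picard_apply dist_real_def picard_def y_def[symmetric] using y
    by (simp add: abs_mult mult.commute flip: right_diff_distrib left_diff_distrib)
qed

definition weighted_ivp :: "real \<Rightarrow> (real \<Rightarrow>\<^sub>C real)" where
  "weighted_ivp s = (THE z. weighted_picard s z = z)"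

lemma weighted_ivp_fixed: "weighted_picard s (weighted_ivp s) = weighted_ivp s"
proof -
  have "\<exists>!z. weighted_picard s z = z"
    by (rule banach_fix_type[of "1/2"]) (use weighted_picard_contraction in auto)
  then show ?thesis unfolding weighted_ivp_def by (rule theI')
qed

lemma weighted_ivp_lipschitz: "dist (weighted_ivp s) (weighted_ivp s') \<le> 2 * R * \<bar>s - s'\<bar>"
proof -
  have "dist (weighted_ivp s) (weighted_ivp s')
      = dist (weighted_picard s (weighted_ivp s)) (weighted_picard s' (weighted_ivp s'))"
    by (simp only: weighted_ivp_fixed)
  also have "\<dots> \<le> dist (weighted_picard s (weighted_ivp s)) (weighted_picard s' (weighted_ivp s))
      + dist (weighted_picard s' (weighted_ivp s)) (weighted_picard s' (weighted_ivp s'))"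
    by (rule dist_triangle)
  also have "\<dots> \<le> R * \<bar>s - s'\<bar> + 1/2 * dist (weighted_ivp s) (weighted_ivp s')"
    by (intro add_mono weighted_picard_slope_dist weighted_picard_contraction)
  finally show ?thesis by simp
qed

definition ivp :: "real \<Rightarrow> real \<Rightarrow> real" where
  "ivp s x = exp (picard_weight * x) * weighted_ivp s x"

lemma continuous_on_ivp: "continuous_on {0..R} (ivp s)"
  unfolding ivp_def by (intro continuous_intros) auto

lemma ivp_eq_picard: "x \<in> {0..R} \<Longrightarrow> ivp s x = picard s (ivp s) x"
  using arg_cong[OF weighted_ivp_fixed[of s], of "\<lambda>z. apply_bcontfun z x"]
  unfolding ivp_def[abs_def] weighted_picard_apply using R_pos
  by (simp add: exp_minus field_simps)

lemma continuous_ivp_endpoint: "continuous_on UNIV (\<lambda>s. ivp s R)"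
proof (rule lipschitz_on_continuous_on)
  show "(exp (picard_weight * R) * (2 * R))-lipschitz_on UNIV (\<lambda>s. ivp s R)"
  proof (rule lipschitz_onI)
    fix s s' :: real
    have "dist (ivp s R) (ivp s' R) = exp (picard_weight * R) * dist (weighted_ivp s R) (weighted_ivp s' R)"
      unfolding ivp_def dist_real_def by (simp add: abs_mult flip: right_diff_distrib)
    also have "\<dots> \<le> exp (picard_weight * R) * (2 * R * \<bar>s - s'\<bar>)"
      using order_trans[OF dist_bounded weighted_ivp_lipschitz] by (intro mult_left_mono) auto
    finally show "dist (ivp s R) (ivp s' R) \<le> exp (picard_weight * R) * (2 * R) * dist s s'"
      by (simp add: dist_real_def)
  qed (use R_pos in simp)
qed

lemma ivp_endpoint_estimate: "\<bar>ivp s R - (a + s * R)\<bar> \<le> R * R * M"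
proof -
  have "continuous_on {0..R} (\<lambda>t. F t (ivp s t))"
    by (rule continuous_on_superposition[OF continuous_on_ivp])
  then have "\<bar>integral {0..R} (\<lambda>t. (R - t) * F t (ivp s t))\<bar> \<le> integral {0..R} (\<lambda>t. R * M)"
  proof (intro integral_norm_bound_integral[where 'a = real and 'n = real, unfolded real_norm_def])
    fix t assume "t \<in> {0..R}"
    then show "\<bar>(R - t) * F t (ivp s t)\<bar> \<le> R * M"
      unfolding abs_mult using F_bounded[of t] by (intro mult_mono) auto
  qed (auto intro!: integrable_continuous_real continuous_intros)
  then show ?thesis
    using ivp_eq_picard[of R s] R_pos unfolding picard_def by simp
qed

lemma exists_ivp_endpoint_eq: "\<exists>s. ivp s R = c"
proof -
  have "0 \<le> M" using F_bounded[of 0] R_pos by force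
  define s0 where "s0 = (c - a - R * R * M) / R"
  define s1 where "s1 = (c - a + R * R * M) / R"
  have "ivp s0 R \<le> c" "c \<le> ivp s1 R" "s0 \<le> s1"
    using ivp_endpoint_estimate[of s0] ivp_endpoint_estimate[of s1] \<open>0 \<le> M\<close> R_pos
    unfolding s0_def s1_def by (auto simp: abs_le_iff divide_right_mono)
  then show ?thesis
    using IVT'[of "\<lambda>s. ivp s R"] continuous_on_subset[OF continuous_ivp_endpoint] by blast
qed

theorem bvp_solution_exists:
  "\<exists>\<psi> \<psi>'. (\<forall>x\<in>{0..R}. (\<psi> has_real_derivative \<psi>' x) (at x within {0..R})) \<and>
     (\<forall>x\<in>{0<..<R}. (\<psi>' has_real_derivative F x (\<psi> x)) (at x)) \<and> \<psi> 0 = a \<and> \<psi> R = c"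
proof -
  obtain s where s: "ivp s R = c" using exists_ivp_endpoint_eq by blast
  define \<psi>' where "\<psi>' x = s + integral {0..x} (\<lambda>t. F t (ivp s t))" for x
  have g: "continuous_on {0..R} (\<lambda>t. F t (ivp s t))"
    by (rule continuous_on_superposition[OF continuous_on_ivp])
  have "(ivp s has_real_derivative \<psi>' x) (at x within {0..R})" if "x \<in> {0..R}" for x
    using has_real_derivative_picard[OF continuous_on_ivp that] that
    unfolding \<psi>'_def
    by (rule has_field_derivative_transform_within[OF _ zero_less_one]) (simp add: ivp_eq_picard)
  moreover have "(\<psi>' has_real_derivative F x (ivp s x)) (at x)" if "x \<in> {0<..<R}" for x
    using integral_has_real_derivative[OF g, of x] that at_within_Icc_at[of 0 x R]
    unfolding \<psi>'_def by (auto intro!: derivative_eq_intros)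
  moreover have "ivp s 0 = a"
    using ivp_eq_picard[of 0 s] R_pos unfolding picard_def by simp
  ultimately show ?thesis using s by blast
qed

end

section \<open>The truncated logistic equation\<close>

definition logistic_rhs :: "real \<Rightarrow> (real \<Rightarrow> real) \<Rightarrow> real \<Rightarrow> real \<Rightarrow> real" where
  "logistic_rhs b \<phi> t u = - (max 0 (min 1 u) * (1 - b * \<phi> t - max 0 (min 1 u)))"

lemma logistic_rhs_bounded:
  assumes "0 \<le> b * \<phi> t" "b * \<phi> t \<le> B"
  shows "\<bar>logistic_rhs b \<phi> t u\<bar> \<le> 2 + B"
proof -
  have "\<bar>logistic_rhs b \<phi> t u\<bar> = max 0 (min 1 u) * \<bar>1 - b * \<phi> t - max 0 (min 1 u)\<bar>"
    unfolding logistic_rhs_def by (simp add: abs_mult)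
  also have "\<dots> \<le> 1 * (2 + B)"
    using assms by (intro mult_mono) auto
  finally show ?thesis by simp
qed

lemma logistic_rhs_lipschitz:
  assumes "0 \<le> b * \<phi> t" "b * \<phi> t \<le> B"
  shows "\<bar>logistic_rhs b \<phi> t u - logistic_rhs b \<phi> t v\<bar> \<le> (2 + B) * \<bar>u - v\<bar>"
proof -
  define cu cv where "cu = max 0 (min 1 u)" and "cv = max 0 (min 1 v)"
  have "logistic_rhs b \<phi> t u - logistic_rhs b \<phi> t v = (cu - cv) * (cu + cv - 1 + b * \<phi> t)"
    unfolding logistic_rhs_def cu_def[symmetric] cv_def[symmetric] by algebra
  then have "\<bar>logistic_rhs b \<phi> t u - logistic_rhs b \<phi> t v\<bar> = \<bar>cu - cv\<bar> * \<bar>cu + cv - 1 + b * \<phi> t\<bar>"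
    by (simp add: abs_mult)
  also have "\<dots> \<le> \<bar>u - v\<bar> * (2 + B)"
    using assms unfolding cu_def cv_def by (intro mult_mono) auto
  finally show ?thesis by (simp add: mult.commute)
qed

lemma continuous_on_logistic_rhs:
  assumes "continuous_on S \<phi>"
  shows "continuous_on (S \<times> UNIV) (\<lambda>(t, u). logistic_rhs b \<phi> t u)"
proof -
  have "continuous_on (S \<times> UNIV) (\<lambda>x. \<phi> (fst x))"
    by (rule continuous_on_compose2[OF assms continuous_on_fst]) auto
  then show ?thesis
    unfolding logistic_rhs_def case_prod_beta by (intro continuous_intros)
qed

lemma is_sol_exists:
  assumes R: "0 < R" and b: "0 \<le> b" and \<phi>: "continuous_on {0..R} \<phi>"
    and \<phi>_nonneg: "\<And>t. t \<in> {0..R} \<Longrightarrow> 0 \<le> \<phi> t" and \<epsilon>: "0 \<le> \<epsilon>" "\<epsilon> \<le> 1"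
  shows "\<exists>\<psi> d\<psi>. is_sol R b \<phi> \<epsilon> \<psi> d\<psi>"
proof -
  obtain \<Phi> where \<Phi>: "\<And>t. t \<in> {0..R} \<Longrightarrow> \<phi> t \<le> \<Phi>"
    using continuous_attains_sup[OF compact_Icc _ \<phi>] R by fastforce
  have b\<phi>: "0 \<le> b * \<phi> t" "b * \<phi> t \<le> b * \<Phi>" if "t \<in> {0..R}" for t
    using \<phi>_nonneg[OF that] \<Phi>[OF that] b by (auto intro: mult_left_mono)
  have "0 \<le> b * \<Phi>" using b\<phi>[of 0] R by simp
  moreover have "\<bar>logistic_rhs b \<phi> t u\<bar> \<le> 2 + b * \<Phi>"
    and "\<bar>logistic_rhs b \<phi> t u - logistic_rhs b \<phi> t v\<bar> \<le> (2 + b * \<Phi>) * \<bar>u - v\<bar>"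
    if "t \<in> {0..R}" for t u v
    using logistic_rhs_bounded logistic_rhs_lipschitz b\<phi>[OF that] by blast+
  ultimately have "\<exists>\<psi> d\<psi>. (\<forall>x\<in>{0..R}. (\<psi> has_real_derivative d\<psi> x) (at x within {0..R})) \<and>
      (\<forall>x\<in>{0<..<R}. (d\<psi> has_real_derivative logistic_rhs b \<phi> x (\<psi> x)) (at x)) \<and>
      \<psi> 0 = 1 - \<epsilon> \<and> \<psi> R = 1 - \<epsilon>"
    by (intro bvp_solution_exists[of R "2 + b * \<Phi>"] continuous_on_logistic_rhs \<phi> R) auto
  then obtain \<psi> d\<psi> where
    d\<psi>: "\<And>x. x \<in> {0..R} \<Longrightarrow> (\<psi> has_real_derivative d\<psi> x) (at x within {0..R})"
    and d2\<psi>: "\<And>x. x \<in> {0<..<R} \<Longrightarrow> (d\<psi> has_real_derivative logistic_rhs b \<phi> x (\<psi> x)) (at x)"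
    and boundary: "\<psi> 0 = 1 - \<epsilon>" "\<psi> R = 1 - \<epsilon>"
    by blast
  have le_1: "\<psi> x \<le> 1" if "x \<in> {0..R}" for x
  proof (rule max_principle[OF R d\<psi> d2\<psi> _ _ _ that])
    show "0 \<le> logistic_rhs b \<phi> x (\<psi> x)" if "x \<in> {0<..<R}" "1 < \<psi> x" for x
      using that b\<phi>[of x] unfolding logistic_rhs_def by auto
  qed (use boundary \<epsilon> in auto)
  have ge_0: "- \<psi> x \<le> 0" if "x \<in> {0..R}" for x
  proof (rule max_principle[OF R _ _ _ _ _ that])
    show "((\<lambda>x. - \<psi> x) has_real_derivative - d\<psi> x) (at x within {0..R})" if "x \<in> {0..R}" for x
      using d\<psi>[OF that] by (rule DERIV_minus)
    show "((\<lambda>x. - d\<psi> x) has_real_derivative - logistic_rhs b \<phi> x (\<psi> x)) (at x)" if "x \<in> {0<..<R}" for x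
      using d2\<psi>[OF that] by (rule DERIV_minus)
    show "0 \<le> - logistic_rhs b \<phi> x (\<psi> x)" if "x \<in> {0<..<R}" "0 < - \<psi> x" for x
      using that unfolding logistic_rhs_def by auto
  qed (use boundary \<epsilon> in auto)
  have "logistic_rhs b \<phi> x (\<psi> x) = - (\<psi> x * (1 - b * \<phi> x - \<psi> x))" if "x \<in> {0..R}" for x
    using le_1[OF that] ge_0[OF that] unfolding logistic_rhs_def by simp
  then have "is_sol R b \<phi> \<epsilon> \<psi> d\<psi>"
    unfolding is_sol_def using d\<psi> d2\<psi> le_1 ge_0 boundary by fastforce
  then show ?thesis by blast
qed

lemma is_sol_reflect:
  assumes "is_sol R b \<phi> \<epsilon> \<psi> d\<psi>"
  shows "is_sol R b (\<lambda>x. \<phi> (R - x)) \<epsilon> (\<lambda>x. \<psi> (R - x)) (\<lambda>x. - d\<psi> (R - x))"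
proof -
  from assms have d\<psi>: "\<And>x. x \<in> {0..R} \<Longrightarrow> (\<psi> has_real_derivative d\<psi> x) (at x within {0..R})"
    and d2\<psi>: "\<And>x. x \<in> {0<..<R} \<Longrightarrow> (d\<psi> has_real_derivative - (\<psi> x * (1 - b * \<phi> x - \<psi> x))) (at x)"
    unfolding is_sol_def by auto
  have "((\<lambda>x. \<psi> (R - x)) has_real_derivative - d\<psi> (R - x)) (at x within {0..R})"
    if "x \<in> {0..R}" for x
  proof -
    have "(\<psi> has_real_derivative d\<psi> (R - x)) (at (R - x) within (\<lambda>x. R - x) ` {0..R})"
      using d\<psi>[of "R - x"] that by (simp add: image_minus_const_atLeastAtMost')
    moreover have "((\<lambda>x. R - x) has_real_derivative -1) (at x within {0..R})"
      by (auto intro!: derivative_eq_intros)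
    ultimately show ?thesis using DERIV_image_chain by (fastforce simp: o_def)
  qed
  moreover have "((\<lambda>x. - d\<psi> (R - x)) has_real_derivative
      - (\<psi> (R - x) * (1 - b * \<phi> (R - x) - \<psi> (R - x)))) (at x)" if "x \<in> {0<..<R}" for x
  proof -
    have "R - x \<in> {0<..<R}" using that by auto
    moreover have "((\<lambda>x. R - x) has_real_derivative -1) (at x)"
      by (auto intro!: derivative_eq_intros)
    ultimately show ?thesis using DERIV_chain2[OF d2\<psi>] DERIV_minus by fastforce
  qed
  ultimately show ?thesis using assms unfolding is_sol_def by auto
qed

lemma is_sol_curvature_lower_bounds:
  assumes "is_sol R b \<phi> \<epsilon> \<psi> d\<psi>" "0 \<le> b" "\<And>x. x \<in> {0<..<R} \<Longrightarrow> 0 \<le> \<phi> x" "x \<in> {0<..<R}"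
  shows "-1 \<le> - (\<psi> x * (1 - b * \<phi> x - \<psi> x))"
    and "\<psi> x * (b * \<phi> x - 1) \<le> - (\<psi> x * (1 - b * \<phi> x - \<psi> x))"
proof -
  have \<psi>: "0 \<le> \<psi> x" "\<psi> x \<le> 1" "0 \<le> \<psi> x * (b * \<phi> x)"
    using assms unfolding is_sol_def by auto
  have eq: "- (\<psi> x * (1 - b * \<phi> x - \<psi> x)) = \<psi> x * (b * \<phi> x - 1) + \<psi> x * \<psi> x"
    by (simp add: algebra_simps)
  show "\<psi> x * (b * \<phi> x - 1) \<le> - (\<psi> x * (1 - b * \<phi> x - \<psi> x))"
    unfolding eq by simp
  have "-1 \<le> \<psi> x * (b * \<phi> x - 1)"
    using \<psi> by (simp add: right_diff_distrib)
  then show "-1 \<le> - (\<psi> x * (1 - b * \<phi> x - \<psi> x))"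
    unfolding eq by (simp add: add_increasing2)
qed

lemma is_sol_high_point_falls_steeply:
  assumes sol: "is_sol R b \<phi> \<epsilon> \<psi> d\<psi>" and b: "0 \<le> b"
    and \<phi>_nonneg: "\<And>x. x \<in> {0<..<R} \<Longrightarrow> 0 \<le> \<phi> x"
    and \<delta>: "0 < \<delta>" "4 * \<delta> \<le> R" "2 * C * \<delta> + 2 * \<delta>^2 \<le> a / 2" "0 \<le> C"
    and K: "0 \<le> K" "\<And>x. x \<in> {\<delta>..R - \<delta>} \<Longrightarrow> K \<le> b * \<phi> x - 1" "1 + C * \<delta> + \<delta>^2 < a * K * \<delta>^2 / 4"
    and z: "z \<in> {0..R/2}" "a \<le> \<psi> z"
  shows "d\<psi> z < - C"
proof (rule ccontr)
  assume "\<not> d\<psi> z < - C"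
  from sol have d\<psi>: "\<And>x. x \<in> {0..R} \<Longrightarrow> (\<psi> has_real_derivative d\<psi> x) (at x within {0..R})"
    and d2\<psi>: "\<And>x. x \<in> {0<..<R} \<Longrightarrow> (d\<psi> has_real_derivative - (\<psi> x * (1 - b * \<phi> x - \<psi> x))) (at x)"
    and range: "\<And>x. x \<in> {0..R} \<Longrightarrow> 0 \<le> \<psi> x \<and> \<psi> x \<le> 1"
    unfolding is_sol_def by auto
  \<comment> \<open>\<open>[p, q]\<close> lies both in \<open>[z, z + 2 \<delta>]\<close>, where \<open>\<psi> \<ge> a/2\<close>, and in \<open>[\<delta>, R - \<delta>]\<close>, where \<open>b \<phi> - 1 \<ge> K\<close>.\<close>
  define p where "p = max z \<delta>"
  define q where "q = p + \<delta>"
  have pq: "z \<le> p" "p < q" "\<delta> \<le> p" "q \<le> R - \<delta>" "p - z \<le> \<delta>" "q - z \<le> 2 * \<delta>"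
    using \<delta> z unfolding p_def q_def by auto
  have d\<psi>_on: "(\<psi> has_real_derivative d\<psi> x) (at x within {u..v})"
    if "x \<in> {u..v}" "0 \<le> u" "v \<le> R" for x u v
    using d\<psi>[of x] that by (auto intro: DERIV_subset)
  have "-1 \<le> - (\<psi> x * (1 - b * \<phi> x - \<psi> x))" if "x \<in> {z<..<q}" for x
    using is_sol_curvature_lower_bounds(1)[OF sol b \<phi>_nonneg] that z pq \<delta> by auto
  note curved = d\<psi>_on[of _ z q] d2\<psi> this
  have high: "a / 2 \<le> \<psi> y" if "y \<in> {z..q}" for y
    using stays_above_half_of_second_deriv_ge_neg_one[OF curved _ _ _ _ \<delta>(3) that]
      z \<delta> pq \<open>\<not> d\<psi> z < - C\<close> by auto
  have "- C - \<delta> \<le> d\<psi> p"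
    using second_deriv_lower_bound(1)[OF curved, of p] pq z \<delta> \<open>\<not> d\<psi> z < - C\<close> by auto
  have "a / 2 * K \<le> - (\<psi> x * (1 - b * \<phi> x - \<psi> x))" if "x \<in> {p<..<q}" for x
  proof -
    have x: "x \<in> {z..q}" "x \<in> {\<delta>..R - \<delta>}" "x \<in> {0<..<R}" using that pq z \<delta> by auto
    have "a / 2 * K \<le> \<psi> x * K"
      using high[OF x(1)] K(1) by (rule mult_right_mono)
    also have "\<dots> \<le> \<psi> x * (b * \<phi> x - 1)"
      using K(2)[OF x(2)] range[of x] x by (intro mult_left_mono) auto
    also have "\<dots> \<le> - (\<psi> x * (1 - b * \<phi> x - \<psi> x))"
      using is_sol_curvature_lower_bounds(2)[OF sol b \<phi>_nonneg] x(3) by auto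
    finally show ?thesis .
  qed
  from second_deriv_lower_bound(2)[OF d\<psi>_on d2\<psi> this, of p q q]
  have "\<psi> p + d\<psi> p * \<delta> + a / 2 * K * \<delta>^2 / 2 \<le> \<psi> q"
    using pq z \<delta> unfolding q_def by auto
  moreover have "(- C - \<delta>) * \<delta> \<le> d\<psi> p * \<delta>"
    using \<open>- C - \<delta> \<le> d\<psi> p\<close> \<delta> by (intro mult_right_mono) auto
  moreover have "a / 2 \<le> \<psi> p" "\<psi> q \<le> 1"
    using high range[of q] pq z \<delta> by auto
  moreover have "0 \<le> a"
    using \<delta> mult_nonneg_nonneg[of C \<delta>] zero_le_power2[of \<delta>] by linarith
  ultimately show False using K(3) by (simp add: algebra_simps power2_eq_square)
qed

lemma is_sol_boundary_layer:
  assumes sol: "is_sol R b \<phi> \<epsilon> \<psi> d\<psi>" and b: "0 \<le> b"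
    and \<phi>_nonneg: "\<And>x. x \<in> {0<..<R} \<Longrightarrow> 0 \<le> \<phi> x"
    and \<delta>: "0 < \<delta>" "4 * \<delta> \<le> R" "2 * C * \<delta> + 2 * \<delta>^2 \<le> (1 - \<epsilon>) / 2" "0 \<le> C"
    and K: "0 \<le> K" "\<And>x. x \<in> {\<delta>..R - \<delta>} \<Longrightarrow> K \<le> b * \<phi> x - 1"
      "1 + C * \<delta> + \<delta>^2 < (1 - \<epsilon>) * K * \<delta>^2 / 4"
  shows "(\<forall>x\<in>{0<..<R}. \<psi> x < 1 - \<epsilon>) \<and> d\<psi> 0 < - C \<and> d\<psi> R > C"
proof -
  have R: "0 < R" using \<delta> by simp
  have boundary: "\<psi> 0 = 1 - \<epsilon>" "\<psi> R = 1 - \<epsilon>" using sol unfolding is_sol_def by auto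
  note left = is_sol_high_point_falls_steeply[OF sol b \<phi>_nonneg \<delta> K]
  note reflected = is_sol_high_point_falls_steeply[OF is_sol_reflect[OF sol] b _ \<delta> K(1) _ K(3)]
  have right: "- d\<psi> (R - z) < - C" if "z \<in> {0..R/2}" "1 - \<epsilon> \<le> \<psi> (R - z)" for z
    using reflected[OF _ _ that] \<phi>_nonneg K(2) by (simp add: algebra_simps)
  have "\<psi> x < 1 - \<epsilon>" if x: "x \<in> {0<..<R}" for x
  proof (rule ccontr)
    assume "\<not> \<psi> x < 1 - \<epsilon>"
    moreover have "\<And>x. x \<in> {0..R} \<Longrightarrow> (\<psi> has_real_derivative d\<psi> x) (at x within {0..R})"
      using sol unfolding is_sol_def by auto
    ultimately obtain x' where x': "x' \<in> {0<..<R}" "1 - \<epsilon> \<le> \<psi> x'" "d\<psi> x' = 0"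
      using exists_interior_max_deriv_zero[of 0 R \<psi> d\<psi> x] x boundary by force
    show False
    proof (cases "x' \<le> R / 2")
      case True
      then show False using left[of x'] x' \<delta> by auto
    next
      case False
      then show False using right[of "R - x'"] x' \<delta> by auto
    qed
  qed
  moreover have "d\<psi> 0 < - C" using left[of 0] boundary R by simp
  moreover have "d\<psi> R > C" using right[of 0] boundary R by simp
  ultimately show ?thesis by blast
qed

lemma eventually_is_sol_boundary_layer:
  assumes R: "0 < R" and \<phi>: "continuous_on {0..R} \<phi>" and \<phi>_pos: "\<And>x. x \<in> {0<..<R} \<Longrightarrow> 0 < \<phi> x"
    and \<epsilon>: "0 < \<epsilon>" "\<epsilon> < 1" and C: "0 \<le> C"
  shows "\<forall>\<^sub>F b in at_top. \<forall>\<psi> d\<psi>. is_sol R b \<phi> \<epsilon> \<psi> d\<psi> \<longrightarrow>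
           (\<forall>x\<in>{0<..<R}. \<psi> x < 1 - \<epsilon>) \<and> d\<psi> 0 < - C \<and> d\<psi> R > C"
proof -
  define \<delta> where "\<delta> = min (R / 4) ((1 - \<epsilon>) / (8 * (C + 1)))"
  have \<delta>: "0 < \<delta>" "4 * \<delta> \<le> R" unfolding \<delta>_def using R \<epsilon> C by auto
  have \<delta>_small: "2 * C * \<delta> + 2 * \<delta>^2 \<le> (1 - \<epsilon>) / 2"
  proof -
    have \<delta>_le: "\<delta> \<le> (1 - \<epsilon>) / (8 * (C + 1))" unfolding \<delta>_def by simp
    then have "\<delta> * (8 * (C + 1)) \<le> 1 - \<epsilon>" using C by (simp add: pos_le_divide_eq)
    moreover have "(1 - \<epsilon>) / (8 * (C + 1)) \<le> 1" using \<epsilon> C by (simp add: pos_divide_le_eq)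
    then have "\<delta> * \<delta> \<le> \<delta>" using \<delta> \<delta>_le by (simp add: mult_le_cancel_left1)
    moreover have "0 \<le> C * \<delta>" "0 \<le> \<delta>" using C \<delta> by simp_all
    ultimately show ?thesis
      unfolding power2_eq_square by (simp add: algebra_simps del: mult_le_cancel_left1)
  qed
  define K where "K = 4 * (2 + C * \<delta> + \<delta>^2) / ((1 - \<epsilon>) * \<delta>^2)"
  have K: "0 \<le> K" "1 + C * \<delta> + \<delta>^2 < (1 - \<epsilon>) * K * \<delta>^2 / 4"
    unfolding K_def using \<epsilon> \<delta> C by (auto simp: field_simps)
  obtain x\<^sub>m where x\<^sub>m: "x\<^sub>m \<in> {\<delta>..R - \<delta>}" "\<And>x. x \<in> {\<delta>..R - \<delta>} \<Longrightarrow> \<phi> x\<^sub>m \<le> \<phi> x"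
    using continuous_attains_inf[OF compact_Icc _ continuous_on_subset[OF \<phi>, of "{\<delta>..R - \<delta>}"]] \<delta>
    by fastforce
  have m: "0 < \<phi> x\<^sub>m" using \<phi>_pos x\<^sub>m(1) \<delta> by auto
  have K_le: "K \<le> b * \<phi> x - 1"
    if b: "0 \<le> b" "(K + 1) / \<phi> x\<^sub>m \<le> b" and x: "x \<in> {\<delta>..R - \<delta>}" for b x
  proof -
    have "K + 1 \<le> b * \<phi> x\<^sub>m" using b m by (simp add: pos_divide_le_eq)
    also have "\<dots> \<le> b * \<phi> x" using x\<^sub>m(2)[OF x] b(1) by (rule mult_left_mono)
    finally show ?thesis by simp
  qed
  show ?thesis
    using eventually_ge_at_top[of "max 0 ((K + 1) / \<phi> x\<^sub>m)"]
  proof eventually_elim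
    case (elim b)
    then have b: "0 \<le> b" "(K + 1) / \<phi> x\<^sub>m \<le> b" by auto
    show ?case
      using is_sol_boundary_layer[where \<phi> = \<phi>, OF _ b(1) _ \<delta> \<delta>_small C K(1) K_le[OF b] K(2)] \<phi>_pos
      by (auto intro: less_imp_le)
  qed
qed

theorem lemma3:
  fixes R \<epsilon> C :: real and \<phi> :: "real \<Rightarrow> real"
  assumes "R > pi" and "0 < \<epsilon>" and "\<epsilon> < 1" and "C > 0"
    and "continuous_on {0..R} \<phi>" and "\<phi> 0 = 0" and "\<phi> R = 0"
    and "\<forall>x\<in>{0<..<R}. \<phi> x > 0"
  shows "\<exists>b>1. (\<exists>\<psi> d\<psi>. is_sol R b \<phi> \<epsilon> \<psi> d\<psi>) \<and>
           (\<forall>\<psi> d\<psi>. is_sol R b \<phi> \<epsilon> \<psi> d\<psi> \<longrightarrow>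
              (\<forall>x\<in>{0<..<R}. \<psi> x < 1 - \<epsilon>) \<and> d\<psi> 0 < - C \<and> d\<psi> R > C)"
proof -
  have R: "0 < R" using \<open>R > pi\<close> pi_gt_zero by linarith
  have \<phi>_nonneg: "0 \<le> \<phi> t" if "t \<in> {0..R}" for t
    using that assms(6-8) by (cases "t = 0 \<or> t = R") (auto intro: less_imp_le)
  have "\<forall>\<^sub>F b in at_top. 1 < b \<and> (\<forall>\<psi> d\<psi>. is_sol R b \<phi> \<epsilon> \<psi> d\<psi> \<longrightarrow>
      (\<forall>x\<in>{0<..<R}. \<psi> x < 1 - \<epsilon>) \<and> d\<psi> 0 < - C \<and> d\<psi> R > C)"
    using assms by (intro eventually_conj eventually_gt_at_top eventually_is_sol_boundary_layer R) auto
  then obtain b where b: "1 < b" "\<forall>\<psi> d\<psi>. is_sol R b \<phi> \<epsilon> \<psi> d\<psi> \<longrightarrow>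
      (\<forall>x\<in>{0<..<R}. \<psi> x < 1 - \<epsilon>) \<and> d\<psi> 0 < - C \<and> d\<psi> R > C"
    by (auto simp: eventually_at_top_linorder)
  moreover have "\<exists>\<psi> d\<psi>. is_sol R b \<phi> \<epsilon> \<psi> d\<psi>"
    using is_sol_exists[OF R _ \<open>continuous_on {0..R} \<phi>\<close> \<phi>_nonneg] b assms by auto
  ultimately show ?thesis by blast
qed

end
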